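(* Let $\mathcal R$ be a reaction network and $\mathcal U\subseteq\mathcal S$ a set of non-interacting species. Let $r_0=(y_0,y_0')\in\mathcal R_{\mathcal U}'$, $m\ge1$, $r_{1i}=(y_i,y_i')\in\mathcal R_{\mathcal U}$ for $i=1,\dots,m$, and $r_1=\oplus_{i=1}^m r_{1i}$, and suppose $r_0\oplus r_1\notin\overline{\mathcal R}_{\mathcal U}$. Then: (i) $r_0\in\mathcal R_{\mathcal U}'\setminus\mathcal R_{\mathcal U}$ and $r_{1i}\in\mathcal R_{\mathcal U}\cap\mathcal R_{\mathcal U}'$ for $i=1,\dots,m-1$; (ii) $\mathrm{supp}(y_i)\cap\mathcal U=\mathrm{supp}(y_{i-1}')\cap\mathcal U\neq\emptyset$ for $i=1,\dots,m$; (iii) if $r_0\oplus r_1\in\overline{\mathcal R}_0$, then $r_{1m}\in\mathcal R_{\mathcal U}\setminus\mathcal R_{\mathcal U}'$. Conversely, let $r_0\in\mathcal R_{\mathcal U}'$, $r_{1i}\in\mathcal R_{\mathcal U}$ ($i=1,\dots,m$), $r_1=\oplus_{i=1}^m r_{1i}$, and suppose (i) and (ii) hold. Then $r_0\oplus r_1\notin\overline{\mathcal R}_{\mathcal U}$; and if furthermore $r_{1m}\in\mathcal R_{\mathcal U}\setminus\mathcal R_{\mathcal U}'$, then $r_0\oplus r_1\in\overline{\mathcal R}_0$.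
   Context: Species $S_1,\dots,S_n$ are the unit vectors of $\mathbb{N}_0^n$ and $\mathcal S=\{S_1,\dots,S_n\}$; for $x\in\mathbb{N}_0^n$, $\mathrm{supp}(x)=\{S_k: x^k>0\}$. A reaction network (RN) is a (possibly infinite) subset $\mathcal R\subseteq\mathbb{N}_0^n\times\mathbb{N}_0^n$ containing no $(y,y')$ with $y=y'$; elements $(y,y')$ are reactions $y\to y'$ with reactant $y$ and product $y'$. For $r_1=(y_1,y_1'),\ r_2=(y_2,y_2')$ define $r_1\oplus r_2=(y_1+0\vee(y_2-y_1'),\ y_2'+0\vee(y_1'-y_2))$ ($\vee$ componentwise maximum); it is associative. $\mathrm{cl}(A)$ is the set of all finite $\oplus$-sums of elements of $A$, including $(0,0)$. For $\mathcal U\subseteq\mathcal S$ and a set $B\subseteq\mathbb{N}_0^n\times\mathbb{N}_0^n$ write $B_{\mathcal U}=\{(y,y')\in B:\mathrm{supp}(y)\cap\mathcal U\neq\emptyset\}$ and $B_{\mathcal U}'=\{(y,y')\in B:\mathrm{supp}(y')\cap\mathcal U\neq\emptyset\}$. Set $\overline{\mathcal R}=\mathrm{cl}(\mathcal R)$ and $\overline{\mathcal R}_0=\overline{\mathcal R}\setminus(\overline{\mathcal R}_{\mathcal U}\cup\overline{\mathcal R}_{\mathcal U}')$. $\mathcal U$ consists of non-interacting species (in $\mathcal R$) if for every reaction $y\to y'\in\mathcal R$, $\sum_{S_i\in\mathcal U}y^i\le1$ and $\sum_{S_i\in\mathcal U}(y')^i\le1$. *)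

theory Defs
  imports Main
begin

text \<open>Species are the elements of a finite type 's (the indices of the unit vectors
  of N_0^n, n = CARD('s)); complexes (elements of N_0^n) are functions 's => nat.\<close>

type_synonym 's complex = "'s \<Rightarrow> nat"
type_synonym 's reaction = "'s complex \<times> 's complex"

definition supp :: "'s complex \<Rightarrow> 's set" where
  "supp x = {k. x k > 0}"

definition reaction_network :: "'s reaction set \<Rightarrow> bool" where
  "reaction_network R \<longleftrightarrow> (\<forall>y. (y, y) \<notin> R)"

text \<open>r1 (+) r2 = (y1 + 0 v (y2 - y1'), y2' + 0 v (y1' - y2)); for naturals,
  0 v (a - b) is truncated subtraction a - b.\<close>
definition oplus :: "'s reaction \<Rightarrow> 's reaction \<Rightarrow> 's reaction" (infixr "\<oplus>\<^sub>R" 65) where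
  "r1 \<oplus>\<^sub>R r2 = (case r1 of (y1, y1') \<Rightarrow> case r2 of (y2, y2') \<Rightarrow>
     (\<lambda>k. y1 k + nat (max 0 (int (y2 k) - int (y1' k))),
      \<lambda>k. y2' k + nat (max 0 (int (y1' k) - int (y2 k)))))"

fun oplus_list :: "'s reaction list \<Rightarrow> 's reaction" where
  "oplus_list [] = (\<lambda>_. 0, \<lambda>_. 0)"
| "oplus_list (r # rs) = r \<oplus>\<^sub>R oplus_list rs"

definition cl :: "'s reaction set \<Rightarrow> 's reaction set" where
  "cl A = {oplus_list rs | rs. set rs \<subseteq> A}"

definition sub_U :: "'s set \<Rightarrow> 's reaction set \<Rightarrow> 's reaction set" where
  "sub_U U B = {(y, y') \<in> B. supp y \<inter> U \<noteq> {}}"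

definition sub_U' :: "'s set \<Rightarrow> 's reaction set \<Rightarrow> 's reaction set" where
  "sub_U' U B = {(y, y') \<in> B. supp y' \<inter> U \<noteq> {}}"

definition cl0 :: "'s set \<Rightarrow> 's reaction set \<Rightarrow> 's reaction set" where
  "cl0 U R = cl R - (sub_U U (cl R) \<union> sub_U' U (cl R))"

definition non_interacting :: "'s set \<Rightarrow> 's reaction set \<Rightarrow> bool" where
  "non_interacting U R \<longleftrightarrow>
     (\<forall>(y, y') \<in> R. (\<Sum>i\<in>U. y i) \<le> 1 \<and> (\<Sum>i\<in>U. y' i) \<le> 1)"

end

theory Submission
  imports Defs
begin

(* On the non-interacting species U every complex of R is either zero or a unit vector.
   Say that r feeds r' if the product of r equals the reactant of r' on U. Along a chain
   r_0, ..., r_m in which each reaction feeds the next, the sum r_0 (+) ... (+) r_m has, on U,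
   the reactant of r_0 and the product of r_m; for complexes that are zero or unit vectors on
   U, feeding is exactly condition (ii), which gives the converse. Conversely, if the sum has
   no reactant in U, then y_0 vanishes on U and the reactant of r_1 (+) ... (+) r_m is bounded
   by y_0' on U; as y_1 does not vanish on U and y_0' is at most a unit vector, y_1 = y_0' on
   U, and the reactant of the rest is bounded by y_1'. Iterating shows that the r_i form a
   chain. *)

lemma fst_oplus [simp]: "fst (a \<oplus>\<^sub>R b) k = fst a k + (fst b k - snd a k)"
  by (cases a; cases b) (auto simp: oplus_def)

lemma snd_oplus [simp]: "snd (a \<oplus>\<^sub>R b) k = snd b k + (snd a k - fst b k)"
  by (cases a; cases b) (auto simp: oplus_def)

lemma oplus_list_in_cl: "set rs \<subseteq> R \<Longrightarrow> oplus_list rs \<in> cl R"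
  by (auto simp: cl_def)

lemma mem_sub_U: "x \<in> sub_U U B \<longleftrightarrow> x \<in> B \<and> (\<exists>k\<in>U. fst x k > 0)"
  by (cases x) (auto simp: sub_U_def supp_def)

lemma mem_sub_U': "x \<in> sub_U' U B \<longleftrightarrow> x \<in> B \<and> (\<exists>k\<in>U. snd x k > 0)"
  by (cases x) (auto simp: sub_U'_def supp_def)

lemma mem_cl0_iff:
  "x \<in> cl0 U R \<longleftrightarrow> x \<in> cl R \<and> x \<notin> sub_U U (cl R) \<and> x \<notin> sub_U' U (cl R)"
  by (auto simp: cl0_def)

lemma successively_map_upt:
  "successively P (map f [0..<m+1]) \<longleftrightarrow> (\<forall>i\<in>{1..m}. P (f (i - 1)) (f i))"
proof -
  have "successively P (map f [0..<m+1]) \<longleftrightarrow> (\<forall>i<m. P (f i) (f (Suc i)))"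
    by (auto simp: successively_conv_nth simp del: upt_Suc)
  also have "\<dots> \<longleftrightarrow> (\<forall>i\<in>{1..m}. P (f (i - 1)) (f i))"
  proof
    assume h: "\<forall>i<m. P (f i) (f (Suc i))"
    show "\<forall>i\<in>{1..m}. P (f (i - 1)) (f i)"
    proof
      fix i assume "i \<in> {1..m}"
      then have "i - 1 < m" "Suc (i - 1) = i" by auto
      then show "P (f (i - 1)) (f i)" using h by metis
    qed
  next
    assume h: "\<forall>i\<in>{1..m}. P (f (i - 1)) (f i)"
    show "\<forall>i<m. P (f i) (f (Suc i))"
      using h by (metis atLeastAtMost_iff diff_Suc_1 Suc_leI le_add1 plus_1_eq_Suc)
  qed
  finally show ?thesis .
qed

lemma sum_le_one_support:
  fixes f :: "'a \<Rightarrow> nat"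
  assumes "finite U" "sum f U \<le> 1" "u \<in> U" "f u > 0" "k \<in> U"
  shows "f k = (if k = u then 1 else 0)"
proof (cases "k = u")
  case True
  then show ?thesis using member_le_sum[of u U f] assms by simp
next
  case False
  have "f u + f k = sum f {u, k}" using False by simp
  also have "\<dots> \<le> sum f U" by (rule sum_mono2) (use assms in auto)
  finally show ?thesis using False assms(2,4) by simp
qed

lemma agree_on_if_le:
  fixes y y' :: "'a \<Rightarrow> nat"
  assumes "finite U" "sum y' U \<le> 1" "\<forall>k\<in>U. y k \<le> y' k" "\<exists>k\<in>U. y k > 0"
  shows "\<forall>k\<in>U. y k = y' k"
proof
  obtain u where u: "u \<in> U" "y u > 0" using assms(4) by blast
  then have "y' u > 0" using assms(3) by force
  fix k assume "k \<in> U"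
  then show "y k = y' k"
    using sum_le_one_support[OF assms(1,2) u(1) \<open>y' u > 0\<close>] assms(3) u by force
qed

lemma supp_inter_eq_iff_agree_on:
  fixes y y' :: "'a \<Rightarrow> nat"
  assumes "finite U" "sum y U \<le> 1" "sum y' U \<le> 1"
  shows "supp y \<inter> U = supp y' \<inter> U \<longleftrightarrow> (\<forall>k\<in>U. y k = y' k)"
proof
  assume supp_eq: "supp y \<inter> U = supp y' \<inter> U"
  show "\<forall>k\<in>U. y k = y' k"
  proof
    fix k assume "k \<in> U"
    then have "y k > 0 \<longleftrightarrow> y' k > 0" using supp_eq by (auto simp: supp_def)
    moreover have "y k \<le> 1" "y' k \<le> 1"
      using member_le_sum[of k U y] member_le_sum[of k U y'] assms \<open>k \<in> U\<close> by auto
    ultimately show "y k = y' k" by linarith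
  qed
qed (auto simp: supp_def)

definition feeds_on :: "'s set \<Rightarrow> 's reaction \<Rightarrow> 's reaction \<Rightarrow> bool" where
  "feeds_on U a b \<longleftrightarrow> (\<forall>k\<in>U. fst b k = snd a k)"

lemma oplus_list_ends_if_feeds_on:
  assumes "successively (feeds_on U) rs" "rs \<noteq> []" "k \<in> U"
  shows "fst (oplus_list rs) k = fst (hd rs) k \<and> snd (oplus_list rs) k = snd (last rs) k"
  using assms
proof (induction rs)
  case (Cons r rs)
  show ?case
  proof (cases "rs = []")
    case False
    then have "fst (hd rs) k = snd r k"
      using Cons.prems by (auto simp: successively_Cons feeds_on_def)
    moreover have "fst (oplus_list rs) k = fst (hd rs) k \<and> snd (oplus_list rs) k = snd (last rs) k"
      using Cons False by (simp add: successively_Cons)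
    ultimately show ?thesis using False by simp
  qed simp
qed simp

lemma feeds_on_if_oplus_list_fst_le:
  assumes "finite U" "rs \<noteq> []"
    and "\<forall>s\<in>set rs. sum (snd s) U \<le> 1 \<and> (\<exists>k\<in>U. fst s k > 0)"
    and "sum g U \<le> 1" "\<forall>k\<in>U. fst (oplus_list rs) k \<le> g k"
  shows "(\<forall>k\<in>U. fst (hd rs) k = g k) \<and> successively (feeds_on U) rs"
  using assms(2-5)
proof (induction rs arbitrary: g)
  case (Cons r rs)
  have r_agrees: "\<forall>k\<in>U. fst r k = g k"
    using Cons.prems by (intro agree_on_if_le[OF assms(1)]) (auto intro: le_trans)
  show ?case
  proof (cases "rs = []")
    case False
    have "\<forall>k\<in>U. fst (oplus_list rs) k \<le> snd r k"
      using Cons.prems(4) r_agrees by fastforce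
    then have "(\<forall>k\<in>U. fst (hd rs) k = snd r k) \<and> successively (feeds_on U) rs"
      using Cons.IH[of "snd r"] Cons.prems(2) False by simp
    then show ?thesis using r_agrees False by (simp add: successively_Cons feeds_on_def)
  qed (use r_agrees in simp)
qed simp

lemma non_interactingD:
  "non_interacting U R \<Longrightarrow> x \<in> R \<Longrightarrow> sum (fst x) U \<le> 1 \<and> sum (snd x) U \<le> 1"
  by (cases x) (auto simp: non_interacting_def)

lemma feeds_on_iff_supp_eq:
  assumes "finite U" "non_interacting U R" "a \<in> R" "b \<in> R"
  shows "feeds_on U a b \<longleftrightarrow> supp (fst b) \<inter> U = supp (snd a) \<inter> U"
  using supp_inter_eq_iff_agree_on[OF assms(1)] non_interactingD[OF assms(2)] assms(3,4)
  by (auto simp: feeds_on_def)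

lemma successively_feeds_on_map_upt_iff:
  assumes "finite U" "non_interacting U R" "\<And>i. i \<le> m \<Longrightarrow> r i \<in> R"
  shows "successively (feeds_on U) (map r [0..<m+1])
    \<longleftrightarrow> (\<forall>i\<in>{1..m}. supp (fst (r i)) \<inter> U = supp (snd (r (i - 1))) \<inter> U)"
proof -
  have "feeds_on U (r (i - 1)) (r i) \<longleftrightarrow> supp (fst (r i)) \<inter> U = supp (snd (r (i - 1))) \<inter> U"
    if "i \<in> {1..m}" for i
    using that assms(3) by (intro feeds_on_iff_supp_eq[OF assms(1,2)]) auto
  then show ?thesis unfolding successively_map_upt by blast
qed

lemma feeds_on_if_oplus_list_notin_sub_U:
  assumes "finite U" "non_interacting U R" "set rs \<subseteq> R"
    and "\<forall>s\<in>set (tl rs). \<exists>k\<in>U. fst s k > 0"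
    and "oplus_list rs \<notin> sub_U U (cl R)"
  shows "successively (feeds_on U) rs"
proof (cases rs)
  case (Cons r ts)
  have "\<forall>k\<in>U. fst (r \<oplus>\<^sub>R oplus_list ts) k = 0"
    using assms(3,5) oplus_list_in_cl[OF assms(3)] Cons by (auto simp: mem_sub_U)
  then have "\<forall>k\<in>U. fst (oplus_list ts) k \<le> snd r k" by simp
  moreover have "sum (snd r) U \<le> 1" "\<forall>s\<in>set ts. sum (snd s) U \<le> 1 \<and> (\<exists>k\<in>U. fst s k > 0)"
    using non_interactingD[OF assms(2)] assms(3,4) Cons by auto
  ultimately have "ts \<noteq> [] \<Longrightarrow> (\<forall>k\<in>U. fst (hd ts) k = snd r k) \<and> successively (feeds_on U) ts"
    using feeds_on_if_oplus_list_fst_le[OF assms(1)] by blast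
  then show ?thesis using Cons by (cases ts) (auto simp: feeds_on_def)
qed simp

lemma oplus_list_mem_sub_U_iff_if_feeds_on:
  assumes "successively (feeds_on U) rs" "rs \<noteq> []" "set rs \<subseteq> R"
  shows "oplus_list rs \<in> sub_U U (cl R) \<longleftrightarrow> hd rs \<in> sub_U U R"
    and "oplus_list rs \<in> sub_U' U (cl R) \<longleftrightarrow> last rs \<in> sub_U' U R"
  using oplus_list_ends_if_feeds_on[OF assms(1,2)] oplus_list_in_cl[OF assms(3)]
    assms(2,3) hd_in_set[OF assms(2)] last_in_set[OF assms(2)]
  by (auto simp: mem_sub_U mem_sub_U')

theorem lemma4p9:
  fixes R :: "('s::finite) reaction set" and U :: "'s set"
    and r :: "nat \<Rightarrow> 's reaction" and m :: nat
  assumes RN: "reaction_network R"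
    and NI: "non_interacting U R"
    and m1: "m \<ge> 1"
    and r0: "r 0 \<in> sub_U' U R"
    and r1i: "\<forall>i\<in>{1..m}. r i \<in> sub_U U R"
  shows
    "(r 0 \<oplus>\<^sub>R oplus_list (map r [1..<m+1]) \<notin> sub_U U (cl R) \<longrightarrow>
        (r 0 \<in> sub_U' U R - sub_U U R
          \<and> (\<forall>i\<in>{1..<m}. r i \<in> sub_U U R \<inter> sub_U' U R))
      \<and> (\<forall>i\<in>{1..m}. supp (fst (r i)) \<inter> U = supp (snd (r (i - 1))) \<inter> U
                     \<and> supp (fst (r i)) \<inter> U \<noteq> {})
      \<and> (r 0 \<oplus>\<^sub>R oplus_list (map r [1..<m+1]) \<in> cl0 U R
           \<longrightarrow> r m \<in> sub_U U R - sub_U' U R))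
   \<and>
    ((r 0 \<in> sub_U' U R - sub_U U R
       \<and> (\<forall>i\<in>{1..<m}. r i \<in> sub_U U R \<inter> sub_U' U R))
      \<and> (\<forall>i\<in>{1..m}. supp (fst (r i)) \<inter> U = supp (snd (r (i - 1))) \<inter> U
                     \<and> supp (fst (r i)) \<inter> U \<noteq> {})
     \<longrightarrow> r 0 \<oplus>\<^sub>R oplus_list (map r [1..<m+1]) \<notin> sub_U U (cl R)
         \<and> (r m \<in> sub_U U R - sub_U' U R
              \<longrightarrow> r 0 \<oplus>\<^sub>R oplus_list (map r [1..<m+1]) \<in> cl0 U R))"
proof -
  define rs where "rs = map r [0..<m+1]"
  have T_eq: "r 0 \<oplus>\<^sub>R oplus_list (map r [1..<m+1]) = oplus_list rs"
    unfolding rs_def by (simp add: upt_conv_Cons del: upt_Suc)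
  have rs: "rs \<noteq> []" "hd rs = r 0" "last rs = r m" "tl rs = map r [1..<m+1]"
    unfolding rs_def by (simp_all add: hd_map last_map map_tl[symmetric] del: upt_Suc)
  have in_R: "r i \<in> R" if "i \<le> m" for i
    using that r0 r1i by (cases i) (auto simp: mem_sub_U mem_sub_U')
  then have rs_R: "set rs \<subseteq> R" unfolding rs_def by auto
  have meets: "\<forall>i\<in>{1..m}. supp (fst (r i)) \<inter> U \<noteq> {}"
    using r1i by (auto simp: sub_U_def case_prod_beta)
  have chain_iff: "successively (feeds_on U) rs
      \<longleftrightarrow> (\<forall>i\<in>{1..m}. supp (fst (r i)) \<inter> U = supp (snd (r (i - 1))) \<inter> U)"
    unfolding rs_def by (rule successively_feeds_on_map_upt_iff[OF _ NI in_R]) simp_all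
  have chain_sub_U': "r i \<in> sub_U' U R" if "successively (feeds_on U) rs" "i \<in> {1..<m}" for i
  proof -
    have "supp (snd (r i)) \<inter> U \<noteq> {}"
      using that meets chain_iff by (metis atLeastAtMost_iff atLeastLessThan_iff diff_Suc_1
          Suc_leI le_add1 less_imp_le_nat plus_1_eq_Suc)
    then show ?thesis using in_R that(2) by (auto simp: mem_sub_U' supp_def)
  qed
  have forward: "successively (feeds_on U) rs" if "oplus_list rs \<notin> sub_U U (cl R)"
  proof (rule feeds_on_if_oplus_list_notin_sub_U[OF _ NI rs_R _ that])
    show "\<forall>s\<in>set (tl rs). \<exists>k\<in>U. fst s k > 0"
      using r1i unfolding rs(4) by (auto simp: mem_sub_U simp del: upt_Suc)
  qed simp
  have ends: "(oplus_list rs \<in> sub_U U (cl R) \<longleftrightarrow> r 0 \<in> sub_U U R)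
      \<and> (oplus_list rs \<in> sub_U' U (cl R) \<longleftrightarrow> r m \<in> sub_U' U R)"
    if "successively (feeds_on U) rs"
    using oplus_list_mem_sub_U_iff_if_feeds_on[OF that rs(1) rs_R] rs(2,3) by simp
  have r_sub_U: "r m \<in> sub_U U R" "\<forall>i\<in>{1..<m}. r i \<in> sub_U U R"
    using r1i m1 by auto
  show ?thesis
  proof (cases "successively (feeds_on U) rs")
    case True
    with r_sub_U show ?thesis
      unfolding T_eq mem_cl0_iff using oplus_list_in_cl[OF rs_R] ends chain_iff chain_sub_U' meets r0
      by auto
  next
    case False
    then show ?thesis unfolding T_eq using forward chain_iff by blast
  qed
qed

end
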